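(* Let $G \ne K_4$ be a connected, claw-free, cubic graph, and let $u(G)$ denote the number of units of $G$. Then \[ u(G)+1 \le \sigma_{(2,1)}(G) \le u(G)+2 . \]
   Context: A graph is claw-free if it has no induced subgraph isomorphic to $K_{1,3}$; it is cubic if every vertex has degree $3$. A diamond is an induced subgraph isomorphic to $K_4$ minus one edge. For a connected, claw-free, cubic graph $G\neq K_4$, the vertex set $V(G)$ can be uniquely partitioned into sets each of which induces a triangle or a diamond in $G$; the parts of this partition are called units (triangle-units and diamond-units), and $u(G)$ is the number of units. $(p,q)$-spreading: let $p\in\mathbb{N}$ and $q\in\mathbb{N}\cup\{\infty\}$. Start with a set $S\subseteq V(G)$ of blue vertices, all other vertices white. The color change rule: if a white vertex $w$ has at least $p$ blue neighbors, and at least one of the blue neighbors of $w$ has at most $q$ white neighbors, then $w$ is recolored blue. $S$ is a $(p,q)$-spreading set if repeatedly applying this rule eventually colors all vertices blue. $\sigma_{(p,q)}(G)$ is the minimum cardinality of a $(p,q)$-spreading set of $G$. *)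

theory Defs
  imports Main "HOL-Library.Extended_Nat"
begin

definition graph :: "'a set \<Rightarrow> ('a \<Rightarrow> 'a \<Rightarrow> bool) \<Rightarrow> bool" where
  "graph V E \<longleftrightarrow> finite V \<and> (\<forall>x y. E x y \<longrightarrow> x \<in> V \<and> y \<in> V)
     \<and> (\<forall>x y. E x y \<longrightarrow> E y x) \<and> (\<forall>x. \<not> E x x)"

definition nbrs :: "'a set \<Rightarrow> ('a \<Rightarrow> 'a \<Rightarrow> bool) \<Rightarrow> 'a \<Rightarrow> 'a set" where
  "nbrs V E v = {w \<in> V. E v w}"

definition cubic :: "'a set \<Rightarrow> ('a \<Rightarrow> 'a \<Rightarrow> bool) \<Rightarrow> bool" where
  "cubic V E \<longleftrightarrow> (\<forall>v\<in>V. card (nbrs V E v) = 3)"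

definition connected_graph :: "'a set \<Rightarrow> ('a \<Rightarrow> 'a \<Rightarrow> bool) \<Rightarrow> bool" where
  "connected_graph V E \<longleftrightarrow> V \<noteq> {} \<and>
     (\<forall>x\<in>V. \<forall>y\<in>V. (\<lambda>a b. a \<in> V \<and> b \<in> V \<and> E a b)\<^sup>*\<^sup>* x y)"

definition claw_free :: "'a set \<Rightarrow> ('a \<Rightarrow> 'a \<Rightarrow> bool) \<Rightarrow> bool" where
  "claw_free V E \<longleftrightarrow> \<not> (\<exists>v\<in>V. \<exists>a b c. a \<in> nbrs V E v \<and> b \<in> nbrs V E v \<and> c \<in> nbrs V E v
      \<and> a \<noteq> b \<and> a \<noteq> c \<and> b \<noteq> c \<and> \<not> E a b \<and> \<not> E a c \<and> \<not> E b c)"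

definition is_K4 :: "'a set \<Rightarrow> ('a \<Rightarrow> 'a \<Rightarrow> bool) \<Rightarrow> bool" where
  "is_K4 V E \<longleftrightarrow> card V = 4 \<and> (\<forall>x\<in>V. \<forall>y\<in>V. x \<noteq> y \<longrightarrow> E x y)"

definition induced_edges :: "('a \<Rightarrow> 'a \<Rightarrow> bool) \<Rightarrow> 'a set \<Rightarrow> 'a set set" where
  "induced_edges E S = {{x, y} | x y. x \<in> S \<and> y \<in> S \<and> x \<noteq> y \<and> E x y}"

definition induces_triangle :: "'a set \<Rightarrow> ('a \<Rightarrow> 'a \<Rightarrow> bool) \<Rightarrow> 'a set \<Rightarrow> bool" where
  "induces_triangle V E S \<longleftrightarrow> S \<subseteq> V \<and> card S = 3 \<and> (\<forall>x\<in>S. \<forall>y\<in>S. x \<noteq> y \<longrightarrow> E x y)"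

definition induces_diamond :: "'a set \<Rightarrow> ('a \<Rightarrow> 'a \<Rightarrow> bool) \<Rightarrow> 'a set \<Rightarrow> bool" where
  "induces_diamond V E S \<longleftrightarrow> S \<subseteq> V \<and> card S = 4 \<and> card (induced_edges E S) = 5"

definition unit_partition :: "'a set \<Rightarrow> ('a \<Rightarrow> 'a \<Rightarrow> bool) \<Rightarrow> 'a set set \<Rightarrow> bool" where
  "unit_partition V E P \<longleftrightarrow> \<Union>P = V \<and> (\<forall>A\<in>P. \<forall>B\<in>P. A \<noteq> B \<longrightarrow> A \<inter> B = {})
     \<and> (\<forall>A\<in>P. induces_triangle V E A \<or> induces_diamond V E A)"

text \<open>u(G): number of units of the (unique) partition into triangle/diamond units.\<close>
definition num_units :: "'a set \<Rightarrow> ('a \<Rightarrow> 'a \<Rightarrow> bool) \<Rightarrow> nat" where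
  "num_units V E = card (THE P. unit_partition V E P)"

text \<open>One application of the (p,q) colour change rule: white w becomes blue.\<close>
definition spread_step :: "nat \<Rightarrow> enat \<Rightarrow> 'a set \<Rightarrow> ('a \<Rightarrow> 'a \<Rightarrow> bool) \<Rightarrow> 'a set \<Rightarrow> 'a set \<Rightarrow> bool" where
  "spread_step p q V E B B' \<longleftrightarrow> (\<exists>w\<in>V. w \<notin> B \<and> B' = insert w B
     \<and> card {v \<in> nbrs V E w. v \<in> B} \<ge> p
     \<and> (\<exists>b \<in> nbrs V E w. b \<in> B \<and> enat (card {x \<in> nbrs V E b. x \<notin> B}) \<le> q))"

definition spreading_set :: "nat \<Rightarrow> enat \<Rightarrow> 'a set \<Rightarrow> ('a \<Rightarrow> 'a \<Rightarrow> bool) \<Rightarrow> 'a set \<Rightarrow> bool" where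
  "spreading_set p q V E S \<longleftrightarrow> S \<subseteq> V \<and> (spread_step p q V E)\<^sup>*\<^sup>* S V"

definition sigma :: "nat \<Rightarrow> enat \<Rightarrow> 'a set \<Rightarrow> ('a \<Rightarrow> 'a \<Rightarrow> bool) \<Rightarrow> nat" where
  "sigma p q V E = (LEAST k. \<exists>S. spreading_set p q V E S \<and> card S = k)"

end

theory Submission
  imports Defs
begin

text \<open>
  Every vertex of a unit has two neighbours inside its unit, hence at most one outside it.
  Under the (2,1) rule a white vertex needs two blue neighbours, so a unit without blue
  vertices stays white forever: a spreading set meets every unit. The first colour change
  needs a blue vertex with at most one white neighbour, so one of its two neighbours in its
  unit is blue too. Thus some unit contains two vertices of the spreading set, and
  sigma(2,1) is at least u + 1.

  Conversely, three vertices force their unit (for a diamond: a tip and both centres). Once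
  a union of units is forced, connectivity yields an edge y'y leaving it; then y' has no
  white neighbour besides y, so adding a single neighbour x of y in the unit W of y forces y
  and then all of W. Growing unit by unit in this way costs 3 + (u - 1) vertices.

  The unit partition consists of the inclusion-maximal triangles and diamonds; claw-freeness
  and G \<noteq> K4 are what make these pairwise disjoint. It is unique because every triangle
  lies inside a single unit of any unit partition.
\<close>

section \<open>Triangles, diamonds and units\<close>

definition is_triangle :: "('a \<Rightarrow> 'a \<Rightarrow> bool) \<Rightarrow> 'a \<Rightarrow> 'a \<Rightarrow> 'a \<Rightarrow> bool" where
  "is_triangle E x y z \<longleftrightarrow> distinct [x, y, z] \<and> E x y \<and> E x z \<and> E y z"

text \<open>The tips of the diamond are \<open>a\<close> and \<open>d\<close>, its centres \<open>b\<close> and \<open>c\<close>.\<close>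

definition is_diamond :: "('a \<Rightarrow> 'a \<Rightarrow> bool) \<Rightarrow> 'a \<Rightarrow> 'a \<Rightarrow> 'a \<Rightarrow> 'a \<Rightarrow> bool" where
  "is_diamond E a b c d \<longleftrightarrow>
     distinct [a, b, c, d] \<and> E a b \<and> E a c \<and> E b c \<and> E b d \<and> E c d \<and> \<not> E a d"

definition is_unit :: "('a \<Rightarrow> 'a \<Rightarrow> bool) \<Rightarrow> 'a set \<Rightarrow> bool" where
  "is_unit E U \<longleftrightarrow> (\<exists>x y z. U = {x, y, z} \<and> is_triangle E x y z)
     \<or> (\<exists>a b c d. U = {a, b, c, d} \<and> is_diamond E a b c d)"

lemma unit_partition_Union: "unit_partition V E Q \<Longrightarrow> \<Union>Q = V"
  by (simp add: unit_partition_def)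

lemma unit_partition_disjoint:
  "unit_partition V E Q \<Longrightarrow> A \<in> Q \<Longrightarrow> B \<in> Q \<Longrightarrow> A \<noteq> B \<Longrightarrow> A \<inter> B = {}"
  by (simp add: unit_partition_def)

lemma connected_graph_edge_leaving:
  assumes "connected_graph V E" "x \<in> V" "y \<in> V" "x \<in> A" "y \<notin> A"
  obtains p q where "E p q" "p \<in> A" "q \<notin> A"
proof -
  have "(\<lambda>a b. a \<in> V \<and> b \<in> V \<and> E a b)\<^sup>*\<^sup>* x y"
    using assms(1-3) unfolding connected_graph_def by blast
  then have "\<exists>p q. E p q \<and> p \<in> A \<and> q \<notin> A"
    using assms(4,5) by (induction rule: rtranclp_induct) auto
  then show thesis
    using that by blast
qed

locale simple_graph =
  fixes V :: "'a set" and E :: "'a \<Rightarrow> 'a \<Rightarrow> bool"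
  assumes graph: "graph V E"
begin

lemma finite_V: "finite V"
  using graph by (simp add: graph_def)

lemma edge_sym: "E x y \<Longrightarrow> E y x"
  using graph by (simp add: graph_def)

lemma edge_in_V: "E x y \<Longrightarrow> x \<in> V" "E x y \<Longrightarrow> y \<in> V"
  using graph by (auto simp: graph_def)

lemma edge_irrefl: "\<not> E x x"
  using graph by (simp add: graph_def)

lemma mem_nbrs_iff: "w \<in> nbrs V E v \<longleftrightarrow> E v w"
  using edge_in_V by (auto simp: nbrs_def)

lemma finite_nbrs: "finite (nbrs V E v)"
  using finite_V by (simp add: nbrs_def)

lemma triangle_perms:
  "is_triangle E x y z \<Longrightarrow> is_triangle E y x z \<and> is_triangle E x z y \<and> is_triangle E z y x"
  using edge_sym by (auto simp: is_triangle_def)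

lemma triangle_rotate:
  assumes "is_triangle E x y z" "w \<in> {x, y, z}"
  obtains u1 u2 where "{x, y, z} = {w, u1, u2}" "is_triangle E w u1 u2"
proof -
  from assms(2) consider "w = x" | "w = y" | "w = z"
    by blast
  then show thesis
  proof cases
    case 1
    then show thesis
      using that[of y z] assms(1) by simp
  next
    case 2
    then show thesis
      using that[of x z] triangle_perms[OF assms(1)] by (simp add: insert_commute)
  next
    case 3
    then show thesis
      using that[of y x] triangle_perms[OF assms(1)] by (simp add: insert_commute)
  qed
qed

lemma diamond_swap_centres: "is_diamond E a b c d \<Longrightarrow> is_diamond E a c b d"
  using edge_sym by (auto simp: is_diamond_def)

lemma diamond_swap_tips: "is_diamond E a b c d \<Longrightarrow> is_diamond E d b c a"
  using edge_sym by (auto simp: is_diamond_def)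

lemma diamond_triangles: "is_diamond E a b c d \<Longrightarrow> is_triangle E a b c \<and> is_triangle E b c d"
  by (auto simp: is_diamond_def is_triangle_def)

lemma triangle_induces_triangle: "is_triangle E x y z \<Longrightarrow> induces_triangle V E {x, y, z}"
  using edge_sym edge_in_V by (auto simp: is_triangle_def induces_triangle_def)

lemma induces_triangle_triangle:
  "induces_triangle V E U \<Longrightarrow> \<exists>x y z. U = {x, y, z} \<and> is_triangle E x y z"
  unfolding induces_triangle_def is_triangle_def card_3_iff by (clarsimp, blast)

lemma diamond_induces_diamond:
  assumes D: "is_diamond E a b c d"
  shows "induces_diamond V E {a, b, c, d}"
proof -
  have "induced_edges E {a, b, c, d} = {{a, b}, {a, c}, {b, c}, {b, d}, {c, d}}"
    unfolding induced_edges_def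
  proof (intro equalityI subsetI)
    fix e assume "e \<in> {{x, y} |x y. x \<in> {a, b, c, d} \<and> y \<in> {a, b, c, d} \<and> x \<noteq> y \<and> E x y}"
    then obtain x y where e: "e = {x, y}" "x \<in> {a, b, c, d}" "y \<in> {a, b, c, d}" "x \<noteq> y" "E x y"
      by blast
    have "distinct [a, b, c, d]" "\<not> E a d" "\<not> E d a"
      using D edge_sym by (auto simp: is_diamond_def)
    with e(2-5) show "e \<in> {{a, b}, {a, c}, {b, c}, {b, d}, {c, d}}"
      unfolding e(1) by (elim insertE emptyE) (simp_all add: insert_commute)
  next
    fix e assume "e \<in> {{a, b}, {a, c}, {b, c}, {b, d}, {c, d}}"
    with D show "e \<in> {{x, y} |x y. x \<in> {a, b, c, d} \<and> y \<in> {a, b, c, d} \<and> x \<noteq> y \<and> E x y}"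
      unfolding is_diamond_def by (elim insertE emptyE) auto
  qed
  moreover have "{a, b, c, d} \<subseteq> V"
    using D edge_in_V unfolding is_diamond_def by blast
  moreover have "distinct [a, b, c, d]"
    using D unfolding is_diamond_def by blast
  ultimately show ?thesis
    unfolding induces_diamond_def by (simp add: doubleton_eq_iff)
qed

lemma induces_diamond_single_non_edge:
  assumes "induces_diamond V E U"
  obtains x y where "x \<in> U" "y \<in> U" "x \<noteq> y" "\<not> E x y"
    and "\<And>p q. p \<in> U \<Longrightarrow> q \<in> U \<Longrightarrow> p \<noteq> q \<Longrightarrow> {p, q} \<noteq> {x, y} \<Longrightarrow> E p q"
proof -
  have U: "U \<subseteq> V" "card U = 4" and five: "card (induced_edges E U) = 5"
    using assms by (auto simp: induces_diamond_def)
  have "finite U"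
    using U(1) finite_V finite_subset by blast
  let ?pairs = "{e. e \<subseteq> U \<and> card e = 2}"
  have "card ?pairs = 6"
    using n_subsets[OF \<open>finite U\<close>, of 2] U(2) by (simp add: numeral_eq_Suc)
  moreover have edges_pairs: "induced_edges E U \<subseteq> ?pairs"
    by (auto simp: induced_edges_def)
  moreover have "finite ?pairs"
    using \<open>finite U\<close> by simp
  ultimately have "card (?pairs - induced_edges E U) = 1"
    using five by (simp add: card_Diff_subset finite_subset[OF edges_pairs])
  then obtain e where e: "?pairs - induced_edges E U = {e}"
    by (rule card_1_singletonE)
  then have "e \<subseteq> U" "card e = 2"
    by auto
  then obtain x y where xy: "e = {x, y}" "x \<noteq> y" "x \<in> U" "y \<in> U"
    by (metis card_2_iff insert_subset)
  have "e \<notin> induced_edges E U"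
    using e by blast
  then have "\<not> E x y"
    using xy unfolding induced_edges_def by blast
  have other_pairs: "f \<in> induced_edges E U" if "f \<in> ?pairs" "f \<noteq> e" for f
    using e that by blast
  have "E p q" if "p \<in> U" "q \<in> U" "p \<noteq> q" "{p, q} \<noteq> {x, y}" for p q
  proof -
    have "{p, q} \<in> induced_edges E U"
      using other_pairs[of "{p, q}"] that xy(1) by simp
    then show ?thesis
      using edge_sym unfolding induced_edges_def by (auto simp: doubleton_eq_iff)
  qed
  with xy(2-4) \<open>\<not> E x y\<close> that show thesis
    by blast
qed

lemma induces_diamond_diamond:
  assumes "induces_diamond V E U"
  shows "\<exists>a b c d. U = {a, b, c, d} \<and> is_diamond E a b c d"
proof -
  obtain x y where xy: "x \<in> U" "y \<in> U" "x \<noteq> y" "\<not> E x y"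
    and adjacent: "\<And>p q. p \<in> U \<Longrightarrow> q \<in> U \<Longrightarrow> p \<noteq> q \<Longrightarrow> {p, q} \<noteq> {x, y} \<Longrightarrow> E p q"
    using induces_diamond_single_non_edge[OF assms] by metis
  have "card (U - {x, y}) = 2"
    using assms xy by (simp add: induces_diamond_def card_Diff_subset)
  then obtain u v where uv: "U - {x, y} = {u, v}" "u \<noteq> v"
    by (auto simp: card_2_iff)
  then have u: "u \<in> U" "u \<noteq> x" "u \<noteq> y" and v: "v \<in> U" "v \<noteq> x" "v \<noteq> y"
    by blast+
  have "E x u" "E x v" "E u v" "E u y" "E v y"
    using u v xy uv(2) by (simp_all add: adjacent doubleton_eq_iff)
  then have "is_diamond E x u v y"
    using xy(3,4) u v uv(2) unfolding is_diamond_def by simp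
  moreover have "U = {x, u, v, y}"
    using uv xy by blast
  ultimately show ?thesis
    by blast
qed

lemma is_unit_iff_induces:
  "is_unit E U \<longleftrightarrow> induces_triangle V E U \<or> induces_diamond V E U"
proof
  assume "is_unit E U"
  then show "induces_triangle V E U \<or> induces_diamond V E U"
    unfolding is_unit_def using triangle_induces_triangle diamond_induces_diamond by blast
next
  assume "induces_triangle V E U \<or> induces_diamond V E U"
  then show "is_unit E U"
    unfolding is_unit_def using induces_triangle_triangle induces_diamond_diamond by blast
qed

lemma is_unit_subset_V: "is_unit E U \<Longrightarrow> U \<subseteq> V"
  using edge_in_V unfolding is_unit_def is_triangle_def is_diamond_def by blast

lemma is_unit_finite: "is_unit E U \<Longrightarrow> finite U"
  unfolding is_unit_def by auto

lemma is_unit_nonempty: "is_unit E U \<Longrightarrow> U \<noteq> {}"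
  unfolding is_unit_def by auto

lemma triangle_two_neighbours:
  assumes "is_triangle E a b c" "x \<in> {a, b, c}"
  shows "\<exists>p\<in>{a, b, c}. \<exists>q\<in>{a, b, c}. p \<noteq> q \<and> E x p \<and> E x q"
  using assms edge_sym unfolding is_triangle_def by (simp, elim disjE; blast)

lemma unit_two_neighbours:
  assumes "is_unit E U" "x \<in> U"
  obtains p q where "p \<noteq> q" "p \<in> U" "q \<in> U" "E x p" "E x q"
proof -
  have "\<exists>p\<in>U. \<exists>q\<in>U. p \<noteq> q \<and> E x p \<and> E x q"
    using assms(1) unfolding is_unit_def
  proof (elim disjE exE conjE)
    fix a b c assume "U = {a, b, c}" "is_triangle E a b c"
    then show ?thesis
      using triangle_two_neighbours assms(2) by blast
  next
    fix a b c d assume U: "U = {a, b, c, d}" and "is_diamond E a b c d"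
    then have "is_triangle E a b c" "is_triangle E b c d"
      using diamond_triangles by blast+
    moreover have "x \<in> {a, b, c} \<or> x \<in> {b, c, d}"
      using assms(2) U by blast
    ultimately show ?thesis
      using triangle_two_neighbours[of a b c x] triangle_two_neighbours[of b c d x] U by blast
  qed
  then show thesis
    using that by blast
qed

lemma unit_partition_is_unit: "unit_partition V E Q \<Longrightarrow> U \<in> Q \<Longrightarrow> is_unit E U"
  unfolding unit_partition_def is_unit_iff_induces by blast

lemma unit_partition_finite: "unit_partition V E Q \<Longrightarrow> finite Q"
  using finite_V unit_partition_Union by (metis finite_UnionD)

end

section \<open>The colour change process\<close>

definition stalled :: "nat \<Rightarrow> enat \<Rightarrow> 'a set \<Rightarrow> ('a \<Rightarrow> 'a \<Rightarrow> bool) \<Rightarrow> 'a set \<Rightarrow> bool" where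
  "stalled p q V E C \<longleftrightarrow> (\<nexists>C'. spread_step p q V E C C')"

lemma spread_steps_subset:
  assumes "(spread_step p q V E)\<^sup>*\<^sup>* S C"
  shows "S \<subseteq> C" and "S \<subseteq> V \<Longrightarrow> C \<subseteq> V"
  using assms by (induction rule: rtranclp_induct) (auto simp: spread_step_def)

lemma stalled_reachable:
  assumes "finite V" "S \<subseteq> V"
  obtains C where "(spread_step p q V E)\<^sup>*\<^sup>* S C" "stalled p q V E C"
proof -
  let ?R = "{C. (spread_step p q V E)\<^sup>*\<^sup>* S C}"
  have "?R \<subseteq> Pow V"
    using spread_steps_subset(2) assms(2) by blast
  then have "finite ?R"
    using assms(1) finite_subset by blast
  moreover have "S \<in> ?R"
    by simp
  ultimately obtain C where C: "C \<in> ?R" "\<forall>C'\<in>?R. C \<le> C' \<longrightarrow> C = C'"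
    using finite_has_maximal by blast
  have "stalled p q V E C"
    unfolding stalled_def
  proof
    assume "\<exists>C'. spread_step p q V E C C'"
    then obtain C' where step: "spread_step p q V E C C'" ..
    then have "C' \<in> ?R"
      using C(1) by (simp add: rtranclp.rtrancl_into_rtrancl)
    moreover have "C \<subset> C'"
      using step unfolding spread_step_def by blast
    ultimately show False
      using C(2) by blast
  qed
  with C(1) that show thesis
    by blast
qed

lemma spreading_setI:
  assumes "finite V" "S \<subseteq> V" "\<And>C. stalled p q V E C \<Longrightarrow> S \<subseteq> C \<Longrightarrow> V \<subseteq> C"
  shows "spreading_set p q V E S"
proof -
  obtain C where C: "(spread_step p q V E)\<^sup>*\<^sup>* S C" "stalled p q V E C"
    using stalled_reachable[OF assms(1,2)] .
  have "C = V"
    using spread_steps_subset[OF C(1)] assms(2) assms(3)[OF C(2)] by blast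
  with C(1) assms(2) show ?thesis
    unfolding spreading_set_def by simp
qed

lemma spreading_set_saturated_vertex:
  assumes "spreading_set p q V E S" "V \<noteq> {}"
  obtains b where "b \<in> S" "enat (card {x \<in> nbrs V E b. x \<notin> S}) \<le> q"
proof -
  have "(spread_step p q V E)\<^sup>*\<^sup>* S V"
    using assms(1) unfolding spreading_set_def by blast
  then show thesis
  proof (cases rule: converse_rtranclpE)
    case base
    then obtain b where "b \<in> S"
      using assms(2) by blast
    moreover have "{x \<in> nbrs V E b. x \<notin> S} = {}"
      using base by (auto simp: nbrs_def)
    ultimately show thesis
      using that[of b] by (simp add: zero_enat_def[symmetric] del: Collect_empty_eq)
  next
    case (step S')
    then show thesis
      using that unfolding spread_step_def nbrs_def by blast
  qed
qed

lemma sigma_le: "spreading_set p q V E S \<Longrightarrow> sigma p q V E \<le> card S"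
  unfolding sigma_def by (rule Least_le) blast

lemma sigma_attained: "\<exists>S. spreading_set p q V E S \<and> card S = sigma p q V E"
  unfolding sigma_def by (rule LeastI_ex) (auto simp: spreading_set_def)

context simple_graph
begin

lemma stalled_forced_mem:
  assumes C: "stalled 2 1 V E C" and y: "E y p" "E y q" "p \<noteq> q" "p \<in> C" "q \<in> C"
    and p_white: "\<And>z. E p z \<Longrightarrow> z \<notin> C \<Longrightarrow> z = y"
  shows "y \<in> C"
proof (rule ccontr)
  assume "y \<notin> C"
  have "{p, q} \<subseteq> {v \<in> nbrs V E y. v \<in> C}"
    using y by (simp add: mem_nbrs_iff)
  then have "card {p, q} \<le> card {v \<in> nbrs V E y. v \<in> C}"
    by (rule card_mono[rotated]) (simp add: finite_nbrs)
  then have "2 \<le> card {v \<in> nbrs V E y. v \<in> C}"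
    using y(3) by simp
  moreover have "{x \<in> nbrs V E p. x \<notin> C} \<subseteq> {y}"
    using p_white by (auto simp: mem_nbrs_iff)
  then have "card {x \<in> nbrs V E p. x \<notin> C} \<le> card {y}"
    by (rule card_mono[rotated]) simp
  then have "enat (card {x \<in> nbrs V E p. x \<notin> C}) \<le> 1"
    by (simp add: one_enat_def)
  moreover have "p \<in> nbrs V E y"
    using y(1) by (simp add: mem_nbrs_iff)
  ultimately have "spread_step 2 1 V E C (insert y C)"
    unfolding spread_step_def using edge_in_V(1)[OF y(1)] \<open>y \<notin> C\<close> y(4) by blast
  with C show False
    unfolding stalled_def by blast
qed

end

section \<open>Unit partitions of cubic graphs\<close>

locale cubic_graph = simple_graph +
  assumes cubic: "cubic V E"
begin

lemma card_nbrs: "v \<in> V \<Longrightarrow> card (nbrs V E v) = 3"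
  using cubic by (simp add: cubic_def)

lemma no_four_neighbours:
  assumes "E v p" "E v q" "E v r" "E v s" "distinct [p, q, r, s]"
  shows False
proof -
  have "{p, q, r, s} \<subseteq> nbrs V E v"
    using assms by (simp add: mem_nbrs_iff)
  then have "card {p, q, r, s} \<le> card (nbrs V E v)"
    by (rule card_mono[OF finite_nbrs])
  moreover have "card (nbrs V E v) = 3"
    using card_nbrs edge_in_V assms(1) by blast
  ultimately show False
    using assms(5) by simp
qed

lemma neighbour_among_three:
  assumes "E v p" "E v q" "E v r" "distinct [p, q, r]" "E v z"
  shows "z \<in> {p, q, r}"
  using no_four_neighbours[of v p q r z] assms by auto

lemma unit_outside_neighbour_unique:
  assumes "is_unit E U" "x \<in> U" "E x p" "E x q" "p \<notin> U" "q \<notin> U"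
  shows "p = q"
proof (rule ccontr)
  assume "p \<noteq> q"
  obtain r s where "r \<noteq> s" "r \<in> U" "s \<in> U" "E x r" "E x s"
    using unit_two_neighbours[OF assms(1,2)] .
  then show False
    using no_four_neighbours[of x r s p q] assms \<open>p \<noteq> q\<close> by auto
qed

lemma diamond_centre_neighbour: "is_diamond E a b c d \<Longrightarrow> E b z \<Longrightarrow> z \<in> {a, c, d}"
  using neighbour_among_three[of b a c d z] edge_sym by (auto simp: is_diamond_def)

lemma unit_partition_inside_neighbour_unique:
  assumes Q: "unit_partition V E Q" and U: "U \<in> Q" "q \<notin> U" "x \<in> U" "y \<in> U"
    and adj: "E q x" "E q y"
  shows "x = y"
proof (rule ccontr)
  assume "x \<noteq> y"
  obtain B where B: "B \<in> Q" "q \<in> B"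
    using unit_partition_Union[OF Q] edge_in_V(1)[OF adj(1)] by blast
  then have "B \<inter> U = {}"
    using unit_partition_disjoint[OF Q B(1) U(1)] U(2) by blast
  obtain r s where "r \<noteq> s" "r \<in> B" "s \<in> B" "E q r" "E q s"
    using unit_two_neighbours[OF unit_partition_is_unit[OF Q B(1)] B(2)] .
  then show False
    using no_four_neighbours[of q r s x y] adj U(3,4) \<open>x \<noteq> y\<close> \<open>B \<inter> U = {}\<close> by auto
qed

lemma triangle_subset_unit:
  assumes Q: "unit_partition V E Q" and U: "U \<in> Q" "x \<in> U" and T: "is_triangle E x y z"
  shows "{x, y, z} \<subseteq> U"
proof -
  have "is_unit E U"
    using unit_partition_is_unit[OF Q U(1)] .
  have "y \<in> U \<and> z \<in> U"
  proof (cases "y \<in> U"; cases "z \<in> U")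
    assume "y \<notin> U" "z \<notin> U"
    then show ?thesis
      using unit_outside_neighbour_unique[OF \<open>is_unit E U\<close> U(2)] T
      by (auto simp: is_triangle_def)
  next
    assume "y \<notin> U" "z \<in> U"
    then show ?thesis
      using unit_partition_inside_neighbour_unique[OF Q U(1) _ U(2), of y z] T edge_sym
      by (auto simp: is_triangle_def)
  next
    assume "y \<in> U" "z \<notin> U"
    then show ?thesis
      using unit_partition_inside_neighbour_unique[OF Q U(1) _ U(2), of z y] T edge_sym
      by (auto simp: is_triangle_def)
  qed simp
  then show ?thesis
    using U(2) by simp
qed

lemma triangle_meeting_unit_subset:
  assumes Q: "unit_partition V E Q" and U: "U \<in> Q" "v \<in> U"
    and T: "is_triangle E x y z" "v \<in> {x, y, z}"
  shows "{x, y, z} \<subseteq> U"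
proof -
  obtain u1 u2 where "{x, y, z} = {v, u1, u2}" "is_triangle E v u1 u2"
    using triangle_rotate[OF T] .
  then show ?thesis
    using triangle_subset_unit[OF Q U] by simp
qed

lemma unit_subset_unit:
  assumes Q: "unit_partition V E Q" and U: "U \<in> Q" "v \<in> U"
    and A: "is_unit E A" "v \<in> A"
  shows "A \<subseteq> U"
  using A unfolding is_unit_def
proof (elim disjE exE conjE)
  fix x y z assume "A = {x, y, z}" "is_triangle E x y z"
  then show ?thesis
    using triangle_meeting_unit_subset[OF Q U] A(2) by blast
next
  fix a b c d assume A_eq: "A = {a, b, c, d}" and D: "is_diamond E a b c d"
  note abc = triangle_meeting_unit_subset[OF Q U(1) _ conjunct1[OF diamond_triangles[OF D]]]
  note bcd = triangle_meeting_unit_subset[OF Q U(1) _ conjunct2[OF diamond_triangles[OF D]]]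
  have "v \<in> {a, b, c} \<or> v \<in> {b, c, d}"
    using A(2) A_eq by blast
  then have "b \<in> U"
    using abc[OF U(2)] bcd[OF U(2)] by blast
  then have "{a, b, c} \<subseteq> U" "{b, c, d} \<subseteq> U"
    using abc[of b] bcd[of b] by simp_all
  then show ?thesis
    using A_eq by simp
qed

lemma unit_partition_subset:
  assumes P: "unit_partition V E P" and Q: "unit_partition V E Q"
  shows "P \<subseteq> Q"
proof
  fix A assume "A \<in> P"
  then have "is_unit E A"
    by (rule unit_partition_is_unit[OF P])
  then obtain v where "v \<in> A"
    using is_unit_nonempty by blast
  moreover have "A \<subseteq> V"
    using is_unit_subset_V[OF \<open>is_unit E A\<close>] .
  ultimately obtain U where U: "U \<in> Q" "v \<in> U"
    using unit_partition_Union[OF Q] by blast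
  have "A \<subseteq> U"
    using unit_subset_unit[OF Q U \<open>is_unit E A\<close> \<open>v \<in> A\<close>] .
  moreover have "U \<subseteq> A"
    using unit_subset_unit[OF P \<open>A \<in> P\<close> \<open>v \<in> A\<close> unit_partition_is_unit[OF Q U(1)] U(2)] .
  ultimately show "A \<in> Q"
    using U(1) by simp
qed

lemma unit_partition_unique: "unit_partition V E P \<Longrightarrow> unit_partition V E Q \<Longrightarrow> P = Q"
  using unit_partition_subset by blast

section \<open>The lower bound\<close>

lemma unit_meets_spreading_set:
  assumes U: "is_unit E U" and "2 \<le> p" and S: "spreading_set p q V E S"
  shows "U \<inter> S \<noteq> {}"
proof
  assume "U \<inter> S = {}"
  have "U \<inter> B = {}" if "(spread_step p q V E)\<^sup>*\<^sup>* S B" for B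
    using that
  proof (induction rule: rtranclp_induct)
    case base
    show ?case
      using \<open>U \<inter> S = {}\<close> .
  next
    case (step B B')
    then obtain w where w: "B' = insert w B" "p \<le> card {v \<in> nbrs V E w. v \<in> B}"
      unfolding spread_step_def by blast
    have "w \<notin> U"
    proof
      assume "w \<in> U"
      have "finite {v \<in> nbrs V E w. v \<in> B}"
        using finite_nbrs by simp
      moreover have "x1 = x2" if "x1 \<in> {v \<in> nbrs V E w. v \<in> B}" "x2 \<in> {v \<in> nbrs V E w. v \<in> B}"
        for x1 x2
        using unit_outside_neighbour_unique[OF U \<open>w \<in> U\<close>] step.IH that by (auto simp: mem_nbrs_iff)
      ultimately have "card {v \<in> nbrs V E w. v \<in> B} \<le> Suc 0"
        using card_le_Suc0_iff_eq by blast
      with w(2) \<open>2 \<le> p\<close> show False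
        by simp
    qed
    with step.IH w(1) show ?case
      by blast
  qed
  then have "U \<inter> V = {}"
    using S unfolding spreading_set_def by blast
  then show False
    using is_unit_subset_V[OF U] is_unit_nonempty[OF U] by blast
qed

lemma spreading_set_unit_twice:
  assumes Q: "unit_partition V E Q" and "V \<noteq> {}" and S: "spreading_set 2 1 V E S"
  obtains U where "U \<in> Q" "2 \<le> card (U \<inter> S)"
proof -
  obtain b where b: "b \<in> S" "card {x \<in> nbrs V E b. x \<notin> S} \<le> 1"
    using spreading_set_saturated_vertex[OF S \<open>V \<noteq> {}\<close>] by (auto simp: one_enat_def)
  moreover have "S \<subseteq> V"
    using S unfolding spreading_set_def by blast
  ultimately obtain U where U: "U \<in> Q" "b \<in> U"
    using unit_partition_Union[OF Q] by blast
  have "is_unit E U"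
    using unit_partition_is_unit[OF Q U(1)] .
  obtain r s where rs: "r \<noteq> s" "r \<in> U" "s \<in> U" "E b r" "E b s"
    using unit_two_neighbours[OF \<open>is_unit E U\<close> U(2)] .
  have "r \<in> S \<or> s \<in> S"
  proof (rule ccontr)
    assume "\<not> (r \<in> S \<or> s \<in> S)"
    then have "{r, s} \<subseteq> {x \<in> nbrs V E b. x \<notin> S}"
      using rs by (simp add: mem_nbrs_iff)
    then have "card {r, s} \<le> card {x \<in> nbrs V E b. x \<notin> S}"
      by (rule card_mono[rotated]) (simp add: finite_nbrs)
    with b(2) rs(1) show False
      by simp
  qed
  then obtain t where "t \<in> U" "t \<in> S" "E b t"
    using rs by blast
  then have "{b, t} \<subseteq> U \<inter> S" "b \<noteq> t"
    using b(1) U(2) edge_irrefl by auto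
  then have "card {b, t} \<le> card (U \<inter> S)"
    using card_mono[OF _ \<open>{b, t} \<subseteq> U \<inter> S\<close>] is_unit_finite[OF \<open>is_unit E U\<close>] by blast
  with \<open>b \<noteq> t\<close> U(1) that show thesis
    by simp
qed

lemma card_spreading_set_gt_units:
  assumes Q: "unit_partition V E Q" and "V \<noteq> {}" and S: "spreading_set 2 1 V E S"
  shows "card Q < card S"
proof -
  have "finite Q"
    using unit_partition_finite[OF Q] .
  have finite_part: "finite (U \<inter> S)" if "U \<in> Q" for U
    using is_unit_finite[OF unit_partition_is_unit[OF Q that]] by simp
  have "card Q = (\<Sum>U\<in>Q. 1)"
    by simp
  also have "\<dots> < (\<Sum>U\<in>Q. card (U \<inter> S))"
  proof (rule sum_strict_mono_ex1[OF \<open>finite Q\<close>])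
    show "\<forall>U\<in>Q. 1 \<le> card (U \<inter> S)"
      using unit_meets_spreading_set[OF unit_partition_is_unit[OF Q] _ S] finite_part
      by (simp add: Suc_le_eq card_gt_0_iff)
    obtain U where "U \<in> Q" "2 \<le> card (U \<inter> S)"
      using spreading_set_unit_twice[OF Q \<open>V \<noteq> {}\<close> S] .
    then show "\<exists>U\<in>Q. 1 < card (U \<inter> S)"
      by force
  qed
  also have "\<dots> = card (\<Union>U\<in>Q. U \<inter> S)"
  proof (rule card_UN_disjoint[symmetric, OF \<open>finite Q\<close>])
    show "\<forall>U\<in>Q. finite (U \<inter> S)"
      using finite_part by blast
    show "\<forall>U\<in>Q. \<forall>U'\<in>Q. U \<noteq> U' \<longrightarrow> U \<inter> S \<inter> (U' \<inter> S) = {}"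
      using unit_partition_disjoint[OF Q] by blast
  qed
  also have "(\<Union>U\<in>Q. U \<inter> S) = S"
    using unit_partition_Union[OF Q] S unfolding spreading_set_def by blast
  finally show ?thesis .
qed

section \<open>The upper bound\<close>

text \<open>
  The process started at \<open>S\<close> ends in a stalled superset of \<open>S\<close>, so a set that forces
  \<open>V\<close> is spreading.
\<close>

definition forces :: "'a set \<Rightarrow> 'a set \<Rightarrow> bool" where
  "forces S X \<longleftrightarrow> (\<forall>C. stalled 2 1 V E C \<longrightarrow> S \<subseteq> C \<longrightarrow> X \<subseteq> C)"

lemma stalled_diamond_subset:
  assumes C: "stalled 2 1 V E C" and D: "is_diamond E a b c d" and "a \<in> C" "b \<in> C"
    and a_out: "\<And>z. E a z \<Longrightarrow> z \<notin> {a, b, c, d} \<Longrightarrow> z \<in> C"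
  shows "{a, b, c, d} \<subseteq> C"
proof -
  have edges: "E c a" "E c b" "E d b" "E d c" "a \<noteq> b" "b \<noteq> c" "\<not> E a d"
    using D edge_sym unfolding is_diamond_def by auto
  have "c \<in> C"
  proof (rule stalled_forced_mem[OF C edges(1,2,5) \<open>a \<in> C\<close> \<open>b \<in> C\<close>])
    fix z assume "E a z" "z \<notin> C"
    then show "z = c"
      using a_out[of z] \<open>a \<in> C\<close> \<open>b \<in> C\<close> edges(7) by auto
  qed
  moreover have "d \<in> C"
  proof (rule stalled_forced_mem[OF C edges(3,4,6) \<open>b \<in> C\<close> \<open>c \<in> C\<close>])
    fix z assume "E b z" "z \<notin> C"
    then show "z = d"
      using diamond_centre_neighbour[OF D] \<open>a \<in> C\<close> \<open>c \<in> C\<close> by blast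
  qed
  ultimately show ?thesis
    using \<open>a \<in> C\<close> \<open>b \<in> C\<close> by simp
qed

lemma diamond_tip_centre:
  assumes D: "is_diamond E a b c d" and "y \<in> {a, b, c, d}" "x \<in> {a, b, c, d}" "E y x"
    and "E y y'" "y' \<notin> {a, b, c, d}"
  obtains c' d' where "is_diamond E y x c' d'" "{a, b, c, d} = {y, x, c', d'}"
proof -
  have "y \<noteq> b" "y \<noteq> c"
    using diamond_centre_neighbour[OF D] diamond_centre_neighbour[OF diamond_swap_centres[OF D]]
      assms(5,6) by auto
  then have "y = a \<or> y = d"
    using assms(2) by blast
  moreover have "x = b \<or> x = c"
    using assms(3,4) \<open>y = a \<or> y = d\<close> D edge_sym edge_irrefl unfolding is_diamond_def by auto
  ultimately consider "y = a" "x = b" | "y = a" "x = c" | "y = d" "x = b" | "y = d" "x = c"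
    by blast
  then show thesis
  proof cases
    case 1
    then show thesis
      using that[of c d] D by simp
  next
    case 2
    then show thesis
      using that[of b d] diamond_swap_centres[OF D] by (simp add: insert_commute)
  next
    case 3
    then show thesis
      using that[of c a] diamond_swap_tips[OF D] by (simp add: insert_commute)
  next
    case 4
    then show thesis
      using that[of b a] diamond_swap_centres[OF diamond_swap_tips[OF D]] by (simp add: insert_commute)
  qed
qed

lemma stalled_triangle_subset:
  assumes C: "stalled 2 1 V E C" and T: "is_triangle E a b c"
    and xy: "x \<in> {a, b, c}" "y \<in> {a, b, c}" "x \<noteq> y" "x \<in> C" "y \<in> C"
    and y_out: "\<And>z. E y z \<Longrightarrow> z \<notin> {a, b, c} \<Longrightarrow> z \<in> C"
  shows "{a, b, c} \<subseteq> C"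
proof
  fix u assume u: "u \<in> {a, b, c}"
  show "u \<in> C"
  proof (cases "u = x \<or> u = y")
    case True
    then show ?thesis
      using xy by blast
  next
    case False
    have "E u y" "E u x"
      using T u xy(1,2) False edge_sym unfolding is_triangle_def by auto
    then show "u \<in> C"
    proof (rule stalled_forced_mem[OF C _ _ xy(3)[symmetric] xy(5,4)])
      fix z assume "E y z" "z \<notin> C"
      then have "z \<in> {a, b, c}" "z \<noteq> y" "z \<noteq> x"
        using y_out edge_irrefl xy(4) by auto
      then show "z = u"
        using u False xy(1-3) by auto
    qed
  qed
qed

lemma stalled_unit_subset:
  assumes C: "stalled 2 1 V E C" and W: "is_unit E W"
    and xy: "x \<in> W" "y \<in> W" "E y x" "x \<in> C" "y \<in> C"
    and y': "E y y'" "y' \<notin> W" "y' \<in> C"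
  shows "W \<subseteq> C"
proof -
  have y_out: "z \<in> C" if "E y z" "z \<notin> W" for z
    using unit_outside_neighbour_unique[OF W xy(2) that(1) y'(1) that(2) y'(2)] y'(3) by simp
  from W show ?thesis
    unfolding is_unit_def
  proof (elim disjE exE conjE)
    fix a b c assume W_eq: "W = {a, b, c}" and T: "is_triangle E a b c"
    show ?thesis
      unfolding W_eq
    proof (rule stalled_triangle_subset[OF C T, of x y])
      show "x \<in> {a, b, c}" "y \<in> {a, b, c}" "x \<in> C" "y \<in> C"
        using xy W_eq by simp_all
      show "x \<noteq> y"
        using xy(3) edge_irrefl by auto
      show "z \<in> C" if "E y z" "z \<notin> {a, b, c}" for z
        using y_out that W_eq by simp
    qed
  next
    fix a b c d assume W_eq: "W = {a, b, c, d}" and D: "is_diamond E a b c d"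
    obtain c' d' where D': "is_diamond E y x c' d'" and W_eq': "W = {y, x, c', d'}"
      using diamond_tip_centre[OF D] xy(1-3) y'(1,2) W_eq by metis
    show ?thesis
      using stalled_diamond_subset[OF C D' xy(5,4)] y_out W_eq' by blast
  qed
qed

lemma stalled_adjacent_unit_subset:
  assumes C: "stalled 2 1 V E C" and Q: "unit_partition V E Q"
    and U: "U \<in> Q" "U \<subseteq> C" "y' \<in> U" and W: "W \<in> Q" "W \<noteq> U" "y \<in> W" "E y' y"
    and x: "x \<in> W" "E y x" "x \<in> C"
  shows "W \<subseteq> C"
proof -
  have "y \<notin> U" "y' \<notin> W"
    using unit_partition_disjoint[OF Q W(1) U(1) W(2)] U(3) W(3) by blast+
  have y'_white: "z = y" if "E y' z" "z \<notin> C" for z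
    using unit_outside_neighbour_unique[OF unit_partition_is_unit[OF Q U(1)] U(3) that(1) W(4)]
      U(2) that(2) \<open>y \<notin> U\<close> by blast
  have "y' \<noteq> x"
    using x(1) \<open>y' \<notin> W\<close> by blast
  then have "y \<in> C"
    using stalled_forced_mem[OF C edge_sym[OF W(4)] x(2)] y'_white U(2,3) x(3) by blast
  then show ?thesis
    using stalled_unit_subset[OF C unit_partition_is_unit[OF Q W(1)] x(1) W(3) x(2) x(3) _
        edge_sym[OF W(4)] \<open>y' \<notin> W\<close>] U(2,3) by blast
qed

lemma forces_unit:
  assumes "is_unit E W"
  obtains S where "S \<subseteq> W" "card S \<le> 3" "forces S W"
proof -
  from assms consider (triangle) a b c where "W = {a, b, c}"
    | (diamond) a b c d where "W = {a, b, c, d}" "is_diamond E a b c d"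
    unfolding is_unit_def by blast
  then show thesis
  proof cases
    case triangle
    then show thesis
      using that[of W] by (simp add: forces_def card_insert_if)
  next
    case diamond
    have "forces {a, b, c} W"
      unfolding forces_def
    proof (intro allI impI)
      fix C assume C: "stalled 2 1 V E C" "{a, b, c} \<subseteq> C"
      have "E d b" "E d c" "b \<noteq> c"
        using diamond(2) edge_sym unfolding is_diamond_def by auto
      then have "d \<in> C"
      proof (rule stalled_forced_mem[OF C(1)])
        show "b \<in> C" "c \<in> C"
          using C(2) by simp_all
        fix z assume "E b z" "z \<notin> C"
        then show "z = d"
          using diamond_centre_neighbour[OF diamond(2)] C(2) by blast
      qed
      then show "W \<subseteq> C"
        using C(2) diamond(1) by simp
    qed
    then show thesis
      using that[of "{a, b, c}"] diamond(1) by (simp add: card_insert_if)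
  qed
qed

end

locale connected_cubic_graph = cubic_graph +
  assumes connected: "connected_graph V E"
begin

lemma V_nonempty: "V \<noteq> {}"
  using connected by (simp add: connected_graph_def)

lemma unit_partition_edge_leaving:
  assumes Q: "unit_partition V E Q" and UU: "UU \<subseteq> Q" "UU \<noteq> {}" "UU \<noteq> Q"
  obtains y' y where "E y' y" "y' \<in> \<Union>UU" "y \<notin> \<Union>UU"
proof -
  obtain u where u: "u \<in> \<Union>UU"
    using UU(1,2) unit_partition_is_unit[OF Q] is_unit_nonempty by blast
  obtain W where W: "W \<in> Q" "W \<notin> UU"
    using UU(1,3) by blast
  then obtain v where "v \<in> W"
    using unit_partition_is_unit[OF Q] is_unit_nonempty by blast
  then have "v \<notin> \<Union>UU"
    using unit_partition_disjoint[OF Q] W UU(1) by blast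
  moreover have "u \<in> V" "v \<in> V"
    using u UU(1) W(1) \<open>v \<in> W\<close> unit_partition_Union[OF Q] by blast+
  ultimately show thesis
    using connected_graph_edge_leaving[OF connected _ _ u] that by blast
qed

lemma forces_extend:
  assumes Q: "unit_partition V E Q" and UU: "UU \<subseteq> Q" "UU \<noteq> {}" "UU \<noteq> Q"
    and S: "forces S (\<Union>UU)"
  obtains W x where "W \<in> Q" "W \<notin> UU" "x \<in> W" "forces (insert x S) (\<Union>(insert W UU))"
proof -
  obtain y' y where edge: "E y' y" "y' \<in> \<Union>UU" "y \<notin> \<Union>UU"
    using unit_partition_edge_leaving[OF Q UU] .
  obtain U where U: "U \<in> UU" "y' \<in> U"
    using edge(2) by blast
  obtain W where W: "W \<in> Q" "y \<in> W"
    using unit_partition_Union[OF Q] edge_in_V(2)[OF edge(1)] by blast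
  have "W \<notin> UU" "W \<noteq> U"
    using edge(3) W(2) U(1) by auto
  obtain x where x: "x \<in> W" "E y x"
    using unit_two_neighbours[OF unit_partition_is_unit[OF Q W(1)] W(2)] by metis
  have "forces (insert x S) (\<Union>(insert W UU))"
    unfolding forces_def
  proof (intro allI impI)
    fix C assume C: "stalled 2 1 V E C" "insert x S \<subseteq> C"
    then have "\<Union>UU \<subseteq> C"
      using S unfolding forces_def by blast
    moreover have "W \<subseteq> C"
      using stalled_adjacent_unit_subset[OF C(1) Q _ _ U(2) W(1) \<open>W \<noteq> U\<close> W(2) edge(1) x]
        U(1) UU(1) \<open>\<Union>UU \<subseteq> C\<close> C(2) by blast
    ultimately show "\<Union>(insert W UU) \<subseteq> C"
      by blast
  qed
  with W(1) \<open>W \<notin> UU\<close> x(1) that show thesis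
    by blast
qed

lemma forcing_set_exists:
  assumes Q: "unit_partition V E Q" and "1 \<le> k" "k \<le> card Q"
  shows "\<exists>UU S. UU \<subseteq> Q \<and> card UU = k \<and> S \<subseteq> V \<and> card S \<le> k + 2 \<and> forces S (\<Union>UU)"
  using assms(2,3)
proof (induction k rule: nat_induct_at_least)
  case base
  then obtain U where U: "U \<in> Q"
    by fastforce
  then have "is_unit E U"
    using unit_partition_is_unit[OF Q] by blast
  then obtain S where "S \<subseteq> U" "card S \<le> 3" "forces S U"
    using forces_unit by blast
  moreover have "U \<subseteq> V"
    using is_unit_subset_V[OF \<open>is_unit E U\<close>] .
  ultimately show ?case
    using U by (intro exI[of _ "{U}"] exI[of _ S]) auto
next
  case (Suc k)
  then obtain UU S where IH: "UU \<subseteq> Q" "card UU = k" "S \<subseteq> V" "card S \<le> k + 2" "forces S (\<Union>UU)"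
    by auto
  have "UU \<noteq> {}" "UU \<noteq> Q"
    using IH(2) Suc by auto
  then obtain W x where W: "W \<in> Q" "W \<notin> UU" "x \<in> W" "forces (insert x S) (\<Union>(insert W UU))"
    using forces_extend[OF Q IH(1)] IH(5) by metis
  have "finite UU"
    using IH(1) unit_partition_finite[OF Q] finite_subset by blast
  moreover have "finite S"
    using IH(3) finite_V finite_subset by blast
  moreover have "x \<in> V"
    using W(1,3) is_unit_subset_V unit_partition_is_unit[OF Q] by blast
  ultimately show ?case
    using W IH by (intro exI[of _ "insert W UU"] exI[of _ "insert x S"]) (auto simp: card_insert_if)
qed

lemma spreading_set_card_le_units:
  assumes Q: "unit_partition V E Q"
  obtains S where "spreading_set 2 1 V E S" "card S \<le> card Q + 2"
proof -
  have "\<Union>Q = V"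
    using unit_partition_Union[OF Q] .
  moreover have "finite Q"
    using unit_partition_finite[OF Q] .
  ultimately have "1 \<le> card Q"
    using V_nonempty by (auto simp: Suc_le_eq card_gt_0_iff)
  then obtain UU S where UU: "UU \<subseteq> Q" "card UU = card Q" and S: "S \<subseteq> V" "card S \<le> card Q + 2"
    and "forces S (\<Union>UU)"
    using forcing_set_exists[OF Q \<open>1 \<le> card Q\<close> le_refl] by blast
  have "UU = Q"
    using card_subset_eq[OF \<open>finite Q\<close> UU] .
  with \<open>forces S (\<Union>UU)\<close> \<open>\<Union>Q = V\<close> have "spreading_set 2 1 V E S"
    using spreading_setI[OF finite_V S(1)] unfolding forces_def by blast
  with S(2) that show thesis
    by blast
qed

end

section \<open>Existence of the unit partition\<close>

locale claw_free_cubic_graph = connected_cubic_graph +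
  assumes claw_free: "claw_free V E" and not_K4: "\<not> is_K4 V E"
begin

lemma vertex_in_triangle:
  assumes "v \<in> V"
  obtains p q where "is_triangle E v p q"
proof -
  obtain p q r where N: "nbrs V E v = {p, q, r}" "p \<noteq> q" "q \<noteq> r" "p \<noteq> r"
    using card_nbrs[OF assms] by (auto simp: card_3_iff)
  then have adj: "E v p" "E v q" "E v r"
    by (auto simp: mem_nbrs_iff[symmetric])
  have "E p q \<or> E p r \<or> E q r"
    using claw_free assms N unfolding claw_free_def by blast
  moreover have "v \<noteq> p" "v \<noteq> q" "v \<noteq> r"
    using adj edge_irrefl by auto
  ultimately show thesis
    using that adj N(2-4) unfolding is_triangle_def by auto
qed

lemma no_four_clique:
  assumes "distinct [a, b, c, d]" "E a b" "E a c" "E a d" "E b c" "E b d" "E c d"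
  shows False
proof -
  let ?K = "{a, b, c, d}"
  have sym_edges: "E b a" "E c a" "E d a" "E c b" "E d b" "E d c"
    using assms edge_sym by auto
  then have K_closed: "z \<in> ?K" if "x \<in> ?K" "E x z" for x z
    using that assms neighbour_among_three[of a b c d z] neighbour_among_three[of b a c d z]
      neighbour_among_three[of c a b d z] neighbour_among_three[of d a b c z] by auto
  have "?K \<subseteq> V"
    using assms(2-4) edge_in_V by blast
  moreover have "V \<subseteq> ?K"
  proof
    fix y assume "y \<in> V"
    show "y \<in> ?K"
    proof (rule ccontr)
      assume "y \<notin> ?K"
      have "a \<in> V" "a \<in> ?K"
        using \<open>?K \<subseteq> V\<close> by auto
      then obtain p q where "E p q" "p \<in> ?K" "q \<notin> ?K"
        using connected_graph_edge_leaving[OF connected _ \<open>y \<in> V\<close> _ \<open>y \<notin> ?K\<close>] by blast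
      with K_closed show False
        by blast
    qed
  qed
  ultimately have "V = ?K"
    by blast
  then have "is_K4 V E"
    using assms sym_edges unfolding is_K4_def by auto
  with not_K4 show False
    by simp
qed

lemma triangles_sharing_edge_diamond:
  assumes "is_triangle E v p q" "is_triangle E v p s" "s \<noteq> q"
  shows "is_diamond E q v p s"
proof -
  have "\<not> E q s"
    using no_four_clique[of v p q s] assms unfolding is_triangle_def by auto
  with assms show ?thesis
    using edge_sym unfolding is_triangle_def is_diamond_def by auto
qed

lemma two_triangles_diamond:
  assumes T1: "is_triangle E v p q" and T2: "is_triangle E v r s" and ne: "{v, p, q} \<noteq> {v, r, s}"
  obtains a b c d where "{v, p, q} \<union> {v, r, s} \<subseteq> {a, b, c, d}" "is_diamond E a b c d"
proof -
  have T1': "is_triangle E v q p" and T2': "is_triangle E v s r"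
    using triangle_perms T1 T2 by blast+
  have "r \<in> {p, q} \<or> s \<in> {p, q}"
    using no_four_neighbours[of v p q r s] T1 T2 unfolding is_triangle_def by auto
  moreover have "\<not> (r \<in> {p, q} \<and> s \<in> {p, q})"
    using ne T2 unfolding is_triangle_def by auto
  ultimately consider "r = p" "s \<notin> {p, q}" | "r = q" "s \<notin> {p, q}"
    | "s = p" "r \<notin> {p, q}" | "s = q" "r \<notin> {p, q}"
    by blast
  then show thesis
  proof cases
    case 1
    then have "is_diamond E q v p s"
      using triangles_sharing_edge_diamond[OF T1, of s] T2 by simp
    with 1 show thesis
      using that[of q v p s] by auto
  next
    case 2
    then have "is_diamond E p v q s"
      using triangles_sharing_edge_diamond[OF T1', of s] T2 by simp
    with 2 show thesis
      using that[of p v q s] by auto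
  next
    case 3
    then have "is_diamond E q v p r"
      using triangles_sharing_edge_diamond[OF T1, of r] T2' by simp
    with 3 show thesis
      using that[of q v p r] by auto
  next
    case 4
    then have "is_diamond E p v q r"
      using triangles_sharing_edge_diamond[OF T1', of r] T2' by simp
    with 4 show thesis
      using that[of p v q r] by auto
  qed
qed

lemma triangle_meeting_diamond_subset:
  assumes D: "is_diamond E a b c d" and T: "is_triangle E x y z" "{x, y, z} \<inter> {a, b, c, d} \<noteq> {}"
  shows "{x, y, z} \<subseteq> {a, b, c, d}"
proof -
  have centre: "{x, y, z} \<subseteq> {a, b, c, d}" if m: "m \<in> {x, y, z}" "m \<in> {b, c}" for m
  proof -
    obtain u1 u2 where "{x, y, z} = {m, u1, u2}" "is_triangle E m u1 u2"
      using triangle_rotate[OF T(1) m(1)] .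
    then show ?thesis
      using m(2) diamond_centre_neighbour[OF D] diamond_centre_neighbour[OF diamond_swap_centres[OF D]]
      unfolding is_triangle_def by auto
  qed
  obtain w where w: "w \<in> {x, y, z}" "w \<in> {a, b, c, d}"
    using T(2) by blast
  have "\<exists>m\<in>{x, y, z}. m \<in> {b, c}"
  proof (rule ccontr)
    assume no_centre: "\<not> (\<exists>m\<in>{x, y, z}. m \<in> {b, c})"
    obtain u1 u2 where u: "{x, y, z} = {w, u1, u2}" "is_triangle E w u1 u2"
      using triangle_rotate[OF T(1) w(1)] .
    have "w = a \<or> w = d"
      using w no_centre by blast
    then have "E w b" "E w c"
      using D edge_sym unfolding is_diamond_def by auto
    moreover have "distinct [b, c, u1, u2]"
      using u no_centre D unfolding is_triangle_def is_diamond_def by auto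
    ultimately show False
      using no_four_neighbours[of w b c u1 u2] u(2) unfolding is_triangle_def by blast
  qed
  then show ?thesis
    using centre by blast
qed

lemma diamonds_meeting_eq:
  assumes D: "is_diamond E a b c d" and D': "is_diamond E a' b' c' d'"
    and meet: "{a, b, c, d} \<inter> {a', b', c', d'} \<noteq> {}"
  shows "{a, b, c, d} = {a', b', c', d'}"
proof -
  have T: "is_triangle E a' b' c'" "is_triangle E b' c' d'"
    using diamond_triangles[OF D'] by blast+
  have "{a', b', c'} \<inter> {a, b, c, d} \<noteq> {} \<or> {b', c', d'} \<inter> {a, b, c, d} \<noteq> {}"
    using meet by blast
  then have "{a', b', c'} \<subseteq> {a, b, c, d} \<or> {b', c', d'} \<subseteq> {a, b, c, d}"
    using triangle_meeting_diamond_subset[OF D] T by blast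
  then have "{a', b', c'} \<subseteq> {a, b, c, d} \<and> {b', c', d'} \<subseteq> {a, b, c, d}"
    using triangle_meeting_diamond_subset[OF D] T by blast
  then have "{a', b', c', d'} \<subseteq> {a, b, c, d}"
    by blast
  moreover have "card {a', b', c', d'} = card {a, b, c, d}"
    using D D' unfolding is_diamond_def by simp
  ultimately show ?thesis
    by (intro card_subset_eq[symmetric]) auto
qed

lemma meeting_units_common_unit:
  assumes A: "is_unit E A" and B: "is_unit E B" and meet: "A \<inter> B \<noteq> {}"
  obtains U where "is_unit E U" "A \<union> B \<subseteq> U"
  using A B unfolding is_unit_def
proof (elim disjE exE conjE)
  fix x y z x' y' z'
  assume A_eq: "A = {x, y, z}" "is_triangle E x y z" and B_eq: "B = {x', y', z'}" "is_triangle E x' y' z'"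
  obtain w where "w \<in> A" "w \<in> B"
    using meet by blast
  obtain p q where A': "A = {w, p, q}" "is_triangle E w p q"
    using triangle_rotate[OF A_eq(2)] \<open>w \<in> A\<close> A_eq(1) by metis
  obtain r s where B': "B = {w, r, s}" "is_triangle E w r s"
    using triangle_rotate[OF B_eq(2)] \<open>w \<in> B\<close> B_eq(1) by metis
  show thesis
  proof (cases "A = B")
    case True
    then show thesis
      using that[of A] A by blast
  next
    case False
    then obtain a b c d where "A \<union> B \<subseteq> {a, b, c, d}" "is_diamond E a b c d"
      using two_triangles_diamond[OF A'(2) B'(2)] A'(1) B'(1) by metis
    then show thesis
      using that[of "{a, b, c, d}"] unfolding is_unit_def by blast
  qed
next
  fix x y z a b c d
  assume "A = {x, y, z}" "is_triangle E x y z" "B = {a, b, c, d}" "is_diamond E a b c d"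
  then show thesis
    using that[of B] B triangle_meeting_diamond_subset meet by blast
next
  fix a b c d x y z
  assume "A = {a, b, c, d}" "is_diamond E a b c d" "B = {x, y, z}" "is_triangle E x y z"
  then show thesis
    using that[of A] A triangle_meeting_diamond_subset meet by blast
next
  fix a b c d a' b' c' d'
  assume "A = {a, b, c, d}" "is_diamond E a b c d" "B = {a', b', c', d'}" "is_diamond E a' b' c' d'"
  then show thesis
    using that[of A] A diamonds_meeting_eq meet by blast
qed

definition maximal_units :: "'a set set" where
  "maximal_units = {U. is_unit E U \<and> (\<forall>U'. is_unit E U' \<longrightarrow> U \<subseteq> U' \<longrightarrow> U' = U)}"

lemma maximal_units_partition: "unit_partition V E maximal_units"
proof -
  have unit: "is_unit E U" if "U \<in> maximal_units" for U
    using that unfolding maximal_units_def by blast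
  have "V \<subseteq> \<Union>maximal_units"
  proof
    fix v assume "v \<in> V"
    then obtain p q where T: "is_triangle E v p q"
      by (rule vertex_in_triangle)
    let ?units = "{U. is_unit E U}"
    have "?units \<subseteq> Pow V"
      using is_unit_subset_V by blast
    then have "finite ?units"
      using finite_V finite_subset by blast
    moreover have "{v, p, q} \<in> ?units"
      using T unfolding is_unit_def by blast
    ultimately obtain M where "M \<in> ?units" "{v, p, q} \<subseteq> M" "\<forall>U\<in>?units. M \<subseteq> U \<longrightarrow> M = U"
      using finite_has_maximal2 by metis
    then have "M \<in> maximal_units" "v \<in> M"
      unfolding maximal_units_def by auto
    then show "v \<in> \<Union>maximal_units"
      by blast
  qed
  moreover have "\<Union>maximal_units \<subseteq> V"
    using unit is_unit_subset_V by blast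
  moreover have "A \<inter> B = {}" if AB: "A \<in> maximal_units" "B \<in> maximal_units" "A \<noteq> B" for A B
  proof (rule ccontr)
    assume "A \<inter> B \<noteq> {}"
    then obtain U where "is_unit E U" "A \<union> B \<subseteq> U"
      using meeting_units_common_unit unit AB(1,2) by metis
    then have "U = A" "U = B"
      using AB(1,2) unfolding maximal_units_def by auto
    with AB(3) show False
      by simp
  qed
  ultimately show ?thesis
    unfolding unit_partition_def using unit is_unit_iff_induces by blast
qed

end

theorem theorem4p9:
  fixes V :: "'a set" and E :: "'a \<Rightarrow> 'a \<Rightarrow> bool"
  assumes "graph V E" and "connected_graph V E" and "claw_free V E" and "cubic V E"
    and "\<not> is_K4 V E"
  shows "num_units V E + 1 \<le> sigma 2 1 V E \<and> sigma 2 1 V E \<le> num_units V E + 2"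
proof -
  interpret claw_free_cubic_graph V E
    using assms by unfold_locales
  have Q: "unit_partition V E maximal_units"
    by (rule maximal_units_partition)
  then have "(THE P. unit_partition V E P) = maximal_units"
    by (rule the_equality) (rule unit_partition_unique[OF _ Q])
  then have units: "num_units V E = card maximal_units"
    by (simp add: num_units_def)
  obtain S where S: "spreading_set 2 1 V E S" "card S = sigma 2 1 V E"
    using sigma_attained by blast
  then have "num_units V E < sigma 2 1 V E"
    using card_spreading_set_gt_units[OF Q V_nonempty S(1)] units by simp
  moreover obtain S' where "spreading_set 2 1 V E S'" "card S' \<le> card maximal_units + 2"
    using spreading_set_card_le_units[OF Q] .
  then have "sigma 2 1 V E \<le> num_units V E + 2"
    using sigma_le[of 2 1 V E S'] units by simp
  ultimately show ?thesis
    by simp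
qed

end
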